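(* Let $f:\mathbb{R}^n\to(-\infty,\infty]$, $g:\mathbb{R}^m\to(-\infty,\infty]$ be closed proper convex, $A\in\mathbb{R}^{m\times n}$, and let $\tau,\sigma>0$, $x^0\in\mathbb{R}^n$, $u^0\in\mathbb{R}^m$, $y^0\in\mathbb{R}^m$ be given with $u^0=Ax^0$. Algorithm CP-$xy\bar y$: set $\bar y^0=y^0$ and for $k\ge0$ compute $x^{k+1}=\mathrm{prox}^f_\tau(x^k-\tau A^\top\bar y^k)$, $y^{k+1}=\mathrm{prox}^{g^*}_\sigma(y^k+\sigma Ax^{k+1})$, $\bar y^{k+1}=2y^{k+1}-y^k$. Algorithm LADMP-$xuy$: for $k\ge0$ compute $x^{k+1}=\mathrm{prox}^f_\tau\big(x^k-\tau\nabla_x\mathcal{Q}^\sigma_P(x^k,u^k,y^k)\big)$, $u^{k+1}=\mathrm{prox}^g_{\sigma^{-1}}(\sigma^{-1}y^k+Ax^{k+1})$, $y^{k+1}=y^k-\sigma(u^{k+1}-Ax^{k+1})$. Then, started from the same $(x^0,y^0)$, both algorithms generate exactly the same sequence $\{(x^k,y^k)\}_{k\ge1}$.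
   Context: For a closed proper convex $h:\mathbb{R}^d\to(-\infty,\infty]$ and $\gamma>0$, $\mathrm{prox}^h_\gamma(x):=\arg\min_z\{h(z)+\frac{1}{2\gamma}\|z-x\|^2\}$. The conjugate is $h^*(x)=\sup_z\{\langle x,z\rangle-h(z)\}$. For $x\in\mathbb{R}^n$, $u,y\in\mathbb{R}^m$, $\mathcal{Q}^\sigma_P(x,u,y):=\frac{\sigma}{2}\|u-Ax-\sigma^{-1}y\|^2-\frac{1}{2\sigma}\|y\|^2$, so $\nabla_x\mathcal{Q}^\sigma_P(x,u,y)=-\sigma A^\top(u-Ax-\sigma^{-1}y)$. *)

theory Defs
  imports "HOL-Analysis.Analysis"
begin

definition proper_fun :: "('a::real_vector \<Rightarrow> ereal) \<Rightarrow> bool" where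
  "proper_fun h \<longleftrightarrow> (\<forall>x. h x \<noteq> -\<infinity>) \<and> (\<exists>x. h x \<noteq> \<infinity>)"

definition closed_fun :: "('a::real_normed_vector \<Rightarrow> ereal) \<Rightarrow> bool" where
  "closed_fun h \<longleftrightarrow> closed {(x, t::real). h x \<le> ereal t}"

definition convex_fun :: "('a::real_vector \<Rightarrow> ereal) \<Rightarrow> bool" where
  "convex_fun h \<longleftrightarrow> convex {(x, t::real). h x \<le> ereal t}"

definition closed_proper_convex :: "('a::real_normed_vector \<Rightarrow> ereal) \<Rightarrow> bool" where
  "closed_proper_convex h \<longleftrightarrow> closed_fun h \<and> proper_fun h \<and> convex_fun h"

definition prox :: "('a::real_normed_vector \<Rightarrow> ereal) \<Rightarrow> real \<Rightarrow> 'a \<Rightarrow> 'a" where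
  "prox h \<gamma> x = (THE z. \<forall>w. h z + ereal (norm (z - x)^2 / (2*\<gamma>))
                              \<le> h w + ereal (norm (w - x)^2 / (2*\<gamma>)))"

definition conj_fun :: "('a::real_inner \<Rightarrow> ereal) \<Rightarrow> 'a \<Rightarrow> ereal" where
  "conj_fun h x = (SUP z. ereal (x \<bullet> z) - h z)"

text \<open>Gradient in x of Q^sigma_P(x,u,y) = sigma/2 ||u - Ax - y/sigma||^2 - ||y||^2/(2 sigma),
  namely -sigma A^T (u - A x - y/sigma).\<close>
definition gradx_QP :: "real^'n^'m \<Rightarrow> real \<Rightarrow> real^'n \<Rightarrow> real^'m \<Rightarrow> real^'m \<Rightarrow> real^'n" where
  "gradx_QP A \<sigma> x u y = - \<sigma> *\<^sub>R (transpose A *v (u - A *v x - (1/\<sigma>) *\<^sub>R y))"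

primrec cp_xyy :: "(real^'n \<Rightarrow> ereal) \<Rightarrow> (real^'m \<Rightarrow> ereal) \<Rightarrow> real^'n^'m \<Rightarrow> real \<Rightarrow> real
    \<Rightarrow> real^'n \<Rightarrow> real^'m \<Rightarrow> nat \<Rightarrow> (real^'n) \<times> (real^'m) \<times> (real^'m)" where
  "cp_xyy f g A \<tau> \<sigma> x0 y0 0 = (x0, y0, y0)"
| "cp_xyy f g A \<tau> \<sigma> x0 y0 (Suc k) =
     (let (x, y, yb) = cp_xyy f g A \<tau> \<sigma> x0 y0 k;
          x' = prox f \<tau> (x - \<tau> *\<^sub>R (transpose A *v yb));
          y' = prox (conj_fun g) \<sigma> (y + \<sigma> *\<^sub>R (A *v x'))
      in (x', y', 2 *\<^sub>R y' - y))"

primrec ladmp_xuy :: "(real^'n \<Rightarrow> ereal) \<Rightarrow> (real^'m \<Rightarrow> ereal) \<Rightarrow> real^'n^'m \<Rightarrow> real \<Rightarrow> real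
    \<Rightarrow> real^'n \<Rightarrow> real^'m \<Rightarrow> real^'m \<Rightarrow> nat \<Rightarrow> (real^'n) \<times> (real^'m) \<times> (real^'m)" where
  "ladmp_xuy f g A \<tau> \<sigma> x0 u0 y0 0 = (x0, u0, y0)"
| "ladmp_xuy f g A \<tau> \<sigma> x0 u0 y0 (Suc k) =
     (let (x, u, y) = ladmp_xuy f g A \<tau> \<sigma> x0 u0 y0 k;
          x' = prox f \<tau> (x - \<tau> *\<^sub>R gradx_QP A \<sigma> x u y);
          u' = prox g (1/\<sigma>) ((1/\<sigma>) *\<^sub>R y + A *v x');
          y' = y - \<sigma> *\<^sub>R (u' - A *v x')
      in (x', u', y'))"

end

theory Submission
  imports Defs
begin

(*
  The link is the Moreau decomposition
      prox^{g*}_sigma(v) = v - sigma prox^g_{1/sigma}(v/sigma),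
  which turns the dual step of CP into the u- and y-steps of LADMP.  Once this is
  known, an induction shows the invariant  x^k, y^k agree  and
  ybar^k = y^k - sigma (u^k - A x^k);  with this invariant the x-steps of the two
  methods coincide, because grad_x Q(x,u,y) = A^T (y - sigma (u - A x)).
*)

section \<open>Proximal points\<close>

definition prox_point :: "('a::real_normed_vector \<Rightarrow> ereal) \<Rightarrow> real \<Rightarrow> 'a \<Rightarrow> 'a \<Rightarrow> bool" where
  "prox_point h \<gamma> x p \<longleftrightarrow>
     (\<forall>w. h p + ereal (norm (p - x)^2 / (2*\<gamma>)) \<le> h w + ereal (norm (w - x)^2 / (2*\<gamma>)))"

lemma prox_as_the_prox_point: "prox h \<gamma> x = (THE p. prox_point h \<gamma> x p)"
  by (simp add: prox_def prox_point_def)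

lemma proper_fun_real_value:
  assumes "proper_fun h" "h z \<noteq> \<infinity>"
  obtains r where "h z = ereal r"
  using assms by (cases "h z") (auto simp: proper_fun_def)

lemma convex_fun_combination:
  assumes "convex_fun h" "h a = ereal ra" "h b = ereal rb" "0 \<le> t" "t \<le> 1"
  shows "h ((1 - t) *\<^sub>R a + t *\<^sub>R b) \<le> ereal ((1 - t) * ra + t * rb)"
proof -
  have "(a, ra) \<in> {(x, t). h x \<le> ereal t}" "(b, rb) \<in> {(x, t). h x \<le> ereal t}"
    using assms by auto
  from convexD[OF assms(1)[unfolded convex_fun_def] this, of "1 - t" t]
  show ?thesis using assms by auto
qed

lemma norm_add_scaleR_square:
  fixes u d :: "'a::real_inner"
  shows "norm (u + t *\<^sub>R d)^2 = norm u ^2 + 2 * t * (u \<bullet> d) + t^2 * norm d ^2"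
  unfolding power2_norm_eq_inner
  by (simp add: inner_add_left inner_add_right inner_commute algebra_simps power2_eq_square)

lemma le_of_le_plus_small_multiples:
  fixes a b c :: real
  assumes le: "\<And>t. 0 < t \<Longrightarrow> t \<le> 1 \<Longrightarrow> a \<le> b + t * c" and "0 \<le> c"
  shows "a \<le> b"
proof (rule field_le_epsilon)
  fix e :: real assume "0 < e"
  define t where "t = min 1 (e / (c + 1))"
  have t: "0 < t" "t \<le> 1" using \<open>0 < e\<close> \<open>0 \<le> c\<close> by (auto simp: t_def)
  have "t * c \<le> e / (c + 1) * c" using \<open>0 \<le> c\<close> by (intro mult_right_mono) (auto simp: t_def)
  also have "\<dots> \<le> e" using \<open>0 < e\<close> \<open>0 \<le> c\<close> by (simp add: field_simps)
  finally show "a \<le> b + e" using le[OF t] by simp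
qed

lemma prox_point_segment_ineq:
  fixes h :: "'a::real_inner \<Rightarrow> ereal"
  assumes cv: "convex_fun h" and pp: "prox_point h \<gamma> x p" and "\<gamma> > 0"
    and hp: "h p = ereal r" and hz: "h z = ereal s" and t: "0 < t" "t \<le> 1"
  shows "r \<le> s + (p - x) \<bullet> (z - p) / \<gamma> + t * (norm (z - p)^2 / (2*\<gamma>))"
proof -
  define d where "d = z - p"
  define zt where "zt = (1 - t) *\<^sub>R p + t *\<^sub>R z"
  have zt_x: "zt - x = (p - x) + t *\<^sub>R d" by (simp add: zt_def d_def algebra_simps)
  have "ereal (r + norm (p - x)^2 / (2*\<gamma>)) \<le> h zt + ereal (norm (zt - x)^2 / (2*\<gamma>))"
    using pp hp unfolding prox_point_def by (metis plus_ereal.simps(1))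
  also have "\<dots> \<le> ereal ((1 - t) * r + t * s) + ereal (norm (zt - x)^2 / (2*\<gamma>))"
    using convex_fun_combination[OF cv hp hz] t by (intro add_right_mono) (simp add: zt_def)
  finally have ineq: "r + norm (p - x)^2 / (2*\<gamma>) \<le> (1 - t) * r + t * s + norm ((p - x) + t *\<^sub>R d)^2 / (2*\<gamma>)"
    by (simp add: zt_x)
  have "norm ((p - x) + t *\<^sub>R d)^2 / (2*\<gamma>)
      = (norm (p - x)^2 + 2 * t * ((p - x) \<bullet> d) + t^2 * norm d ^2) / (2*\<gamma>)"
    by (simp only: norm_add_scaleR_square)
  also have "\<dots> = norm (p - x)^2 / (2*\<gamma>) + t * ((p - x) \<bullet> d / \<gamma>) + t * (t * (norm d ^2 / (2*\<gamma>)))"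
    using \<open>\<gamma> > 0\<close> by (simp add: field_simps power2_eq_square)
  finally have "t * r \<le> t * (s + (p - x) \<bullet> d / \<gamma> + t * (norm d ^2 / (2*\<gamma>)))"
    using ineq by (simp add: algebra_simps)
  then show ?thesis using t by (simp add: d_def)
qed

lemma prox_point_subgradient:
  fixes h :: "'a::real_inner \<Rightarrow> ereal"
  assumes cv: "convex_fun h" and pr: "proper_fun h" and "\<gamma> > 0" and pp: "prox_point h \<gamma> x p"
  obtains r where "h p = ereal r" "\<forall>z. ereal (r + (x - p) \<bullet> (z - p) / \<gamma>) \<le> h z"
proof -
  obtain z0 where "h z0 \<noteq> \<infinity>" using pr unfolding proper_fun_def by auto
  with pr obtain r0 where r0: "h z0 = ereal r0" by (rule proper_fun_real_value)
  have "h p + ereal (norm (p - x)^2 / (2*\<gamma>)) \<le> ereal (r0 + norm (z0 - x)^2 / (2*\<gamma>))"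
    using pp r0 unfolding prox_point_def by (metis plus_ereal.simps(1))
  then have "h p \<noteq> \<infinity>" by auto
  with pr obtain r where hp: "h p = ereal r" by (rule proper_fun_real_value)
  have "ereal (r + (x - p) \<bullet> (z - p) / \<gamma>) \<le> h z" for z
  proof (cases "h z")
    case (real s)
    have "r \<le> s + (p - x) \<bullet> (z - p) / \<gamma>"
      by (rule le_of_le_plus_small_multiples[OF prox_point_segment_ineq[OF cv pp \<open>\<gamma> > 0\<close> hp real]])
         (use \<open>\<gamma> > 0\<close> in auto)
    moreover have "(x - p) \<bullet> (z - p) = - ((p - x) \<bullet> (z - p))" by (simp add: inner_diff_left)
    ultimately show ?thesis using real by simp
  qed (use pr in \<open>auto simp: proper_fun_def\<close>)
  with hp show ?thesis using that by blast
qed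

text \<open>Conversely, the subgradient inequality determines the proximal map (no convexity
  needed): it forces quadratic growth of h + |. - x|^2/(2\<gamma>) away from p.\<close>
lemma prox_eq_if_subgradient:
  fixes h :: "'a::real_inner \<Rightarrow> ereal"
  assumes "\<gamma> > 0" and hp: "h p = ereal r"
    and sg: "\<forall>z. ereal (r + (x - p) \<bullet> (z - p) / \<gamma>) \<le> h z"
  shows "prox h \<gamma> x = p"
proof -
  define m where "m = r + norm (p - x)^2 / (2*\<gamma>)"
  have growth: "ereal (m + norm (z - p)^2 / (2*\<gamma>)) \<le> h z + ereal (norm (z - x)^2 / (2*\<gamma>))" for z
  proof -
    have "norm (z - x)^2 = norm (z - p)^2 + 2 * ((z - p) \<bullet> (p - x)) + norm (p - x)^2"
      using norm_add_scaleR_square[of "z - p" 1 "p - x"] by (simp add: algebra_simps)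
    then have "r + (x - p) \<bullet> (z - p) / \<gamma> + norm (z - x)^2 / (2*\<gamma>) = m + norm (z - p)^2 / (2*\<gamma>)"
      using \<open>\<gamma> > 0\<close> by (simp add: m_def field_simps inner_diff_left inner_diff_right inner_commute)
    moreover have "ereal (r + (x - p) \<bullet> (z - p) / \<gamma>) + ereal (norm (z - x)^2 / (2*\<gamma>))
        \<le> h z + ereal (norm (z - x)^2 / (2*\<gamma>))"
      using sg by (intro add_right_mono) auto
    ultimately show ?thesis by simp
  qed
  have value_p: "h p + ereal (norm (p - x)^2 / (2*\<gamma>)) = ereal m" by (simp add: hp m_def)
  have "prox_point h \<gamma> x p"
    unfolding prox_point_def value_p
  proof
    fix w
    have "ereal m \<le> ereal (m + norm (w - p)^2 / (2*\<gamma>))" using \<open>\<gamma> > 0\<close> by simp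
    also have "\<dots> \<le> h w + ereal (norm (w - x)^2 / (2*\<gamma>))" by (rule growth)
    finally show "ereal m \<le> h w + ereal (norm (w - x)^2 / (2*\<gamma>))" .
  qed
  moreover have "q = p" if "prox_point h \<gamma> x q" for q
  proof -
    have "ereal (m + norm (q - p)^2 / (2*\<gamma>)) \<le> ereal m"
      using growth[of q] that value_p unfolding prox_point_def by (metis order_trans)
    then have "norm (q - p)^2 / (2*\<gamma>) \<le> 0" by simp
    then show "q = p" using \<open>\<gamma> > 0\<close> by (simp add: divide_le_0_iff)
  qed
  ultimately show ?thesis unfolding prox_as_the_prox_point by (rule the_equality)
qed

section \<open>Existence of proximal points\<close>

text \<open>A closed proper convex function on a Euclidean space has an affine minorant
  (separate a point below the epigraph from the closed convex epigraph).\<close>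
lemma affine_minorant:
  fixes g :: "'a::euclidean_space \<Rightarrow> ereal"
  assumes "closed_proper_convex g"
  obtains c0 c1 where "\<And>z s. g z = ereal s \<Longrightarrow> c0 + c1 \<bullet> z \<le> s"
proof -
  define E where "E = {(x, t::real). g x \<le> ereal t}"
  have cE: "closed E" "convex E"
    using assms unfolding E_def closed_proper_convex_def closed_fun_def convex_fun_def by auto
  have pr: "proper_fun g" using assms by (simp add: closed_proper_convex_def)
  obtain z0 where "g z0 \<noteq> \<infinity>" using pr unfolding proper_fun_def by auto
  with pr obtain r0 where r0: "g z0 = ereal r0" by (rule proper_fun_real_value)
  have "(z0, r0 - 1) \<notin> E" using r0 by (simp add: E_def)
  from separating_hyperplane_closed_point[OF cE(2) cE(1) this]
  obtain a b where ab: "a \<bullet> (z0, r0 - 1) < b" "\<forall>y\<in>E. a \<bullet> y > b" by blast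
  obtain a1 a2 where a: "a = (a1, a2)" by (cases a)
  have "(z0, r0) \<in> E" using r0 by (simp add: E_def)
  with ab have "b < a1 \<bullet> z0 + a2 * r0" "a1 \<bullet> z0 + a2 * (r0 - 1) < b"
    by (auto simp: a inner_Pair)
  then have a2: "a2 > 0" by (simp add: algebra_simps)
  have "b / a2 + (- a1 /\<^sub>R a2) \<bullet> z \<le> s" if "g z = ereal s" for z s
  proof -
    have "(z, s) \<in> E" using that by (simp add: E_def)
    with ab have "b - a1 \<bullet> z \<le> a2 * s" by (auto simp: a inner_Pair)
    then have "(b - a1 \<bullet> z) / a2 \<le> s" using a2 by (simp add: field_simps)
    then show ?thesis by (simp add: diff_divide_distrib divide_inverse algebra_simps)
  qed
  then show ?thesis using that by blast
qed

lemma quadratic_growth_bound: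
  fixes \<alpha> c D K :: real
  assumes "\<alpha> > 0" "c \<ge> 0" "D \<ge> 0" "\<alpha> * D^2 \<le> K + c * D"
  shows "D \<le> 1 + 2 * c / \<alpha> + 2 * \<bar>K\<bar> / \<alpha>"
proof (rule ccontr)
  assume H: "\<not> ?thesis"
  have "2 * c / \<alpha> \<ge> 0" "2 * \<bar>K\<bar> / \<alpha> \<ge> 0" using assms by auto
  then have D1: "D \<ge> 1" and D2: "D \<ge> 2 * c / \<alpha>" and D3: "D > 2 * \<bar>K\<bar> / \<alpha>"
    using H by linarith+
  from D2 have "c \<le> \<alpha> * D / 2" using assms(1) by (simp add: field_simps)
  then have "c * D \<le> \<alpha> * D / 2 * D" using assms(3) by (rule mult_right_mono)
  with assms(4) have "\<alpha> * D^2 / 2 \<le> K" by (simp add: power2_eq_square algebra_simps)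
  moreover have "\<alpha> * D \<le> \<alpha> * D^2" using D1 assms(1) by (simp add: power2_eq_square)
  ultimately have "\<alpha> * D \<le> 2 * \<bar>K\<bar>" by linarith
  then have "D \<le> 2 * \<bar>K\<bar> / \<alpha>" using assms(1) by (simp add: field_simps)
  with D3 show False by linarith
qed

text \<open>Sublevel sets of (z, t) \<mapsto> t + |z - x|^2/(2\<gamma>) on the epigraph of g are compact:
  the affine minorant bounds t from below, and then the quadratic term bounds z.\<close>
lemma prox_sublevel_compact:
  fixes g :: "'a::euclidean_space \<Rightarrow> ereal"
  assumes cpc: "closed_proper_convex g" and "\<gamma> > 0"
  shows "compact {(z, t). g z \<le> ereal t \<and> t + norm (z - x)^2 / (2*\<gamma>) \<le> C}"
    (is "compact ?K")
proof -
  obtain c0 c1 where aff: "\<And>z s. g z = ereal s \<Longrightarrow> c0 + c1 \<bullet> z \<le> s"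
    using affine_minorant[OF cpc] by blast
  have pr: "proper_fun g" using cpc by (simp add: closed_proper_convex_def)
  define F where "F = (\<lambda>y::'a \<times> real. snd y + norm (fst y - x)^2 / (2*\<gamma>))"
  have K: "?K = {(x, t::real). g x \<le> ereal t} \<inter> {y. F y \<le> C}" by (auto simp: F_def)
  have "closed {y. F y \<le> C}" unfolding F_def
    by (intro closed_Collect_le continuous_intros) (use \<open>\<gamma> > 0\<close> in auto)
  then have "closed ?K"
    unfolding K using cpc by (intro closed_Int) (auto simp: closed_proper_convex_def closed_fun_def)
  define \<alpha> where "\<alpha> = 1 / (2*\<gamma>)"
  have \<alpha>: "\<alpha> > 0" using \<open>\<gamma> > 0\<close> by (simp add: \<alpha>_def)
  define K' where "K' = C - c0 - c1 \<bullet> x"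
  define R where "R = 1 + 2 * norm c1 / \<alpha> + 2 * \<bar>K'\<bar> / \<alpha>"
  define L where "L = c0 - norm c1 * (norm x + R)"
  have "?K \<subseteq> cball x R \<times> {L..C}"
  proof
    fix y assume "y \<in> ?K"
    then obtain z t where y: "y = (z, t)"
      and gz: "g z \<le> ereal t" and Ft: "t + norm (z - x)^2 / (2*\<gamma>) \<le> C" by auto
    obtain s where s: "g z = ereal s" using gz pr by (elim proper_fun_real_value) auto
    have lb: "c0 + c1 \<bullet> z \<le> t" using aff[OF s] gz s by simp
    have "- (c1 \<bullet> (z - x)) \<le> norm c1 * norm (z - x)"
      using norm_cauchy_schwarz[of "- c1" "z - x"] by simp
    then have "\<alpha> * norm (z - x)^2 \<le> K' + norm c1 * norm (z - x)"
      using Ft lb by (simp add: \<alpha>_def K'_def inner_diff_right)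
    then have D: "norm (z - x) \<le> R"
      unfolding R_def by (rule quadratic_growth_bound[OF \<alpha> norm_ge_zero norm_ge_zero])
    then have "norm c1 * norm z \<le> norm c1 * (norm x + R)"
      using norm_triangle_ineq2[of z x] by (intro mult_left_mono) auto
    then have "L \<le> t" using lb norm_cauchy_schwarz[of "- c1" z] unfolding L_def by simp
    moreover have "0 \<le> norm (z - x)^2 / (2*\<gamma>)" using \<open>\<gamma> > 0\<close> by simp
    then have "t \<le> C" using Ft by linarith
    ultimately show "y \<in> cball x R \<times> {L..C}"
      using D by (simp add: y dist_norm norm_minus_commute)
  qed
  moreover have "bounded (cball x R \<times> {L..C})" by (intro bounded_Times) auto
  ultimately have "bounded ?K" by (rule bounded_subset[rotated])
  with \<open>closed ?K\<close> show ?thesis by (simp add: compact_eq_bounded_closed)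
qed

text \<open>Proximal points of closed proper convex functions exist: minimise the continuous
  function t + |z - x|^2/(2\<gamma>) over a nonempty compact sublevel set of the epigraph.\<close>
lemma prox_point_exists:
  fixes g :: "'a::euclidean_space \<Rightarrow> ereal"
  assumes cpc: "closed_proper_convex g" and "\<gamma> > 0"
  obtains p where "prox_point g \<gamma> x p"
proof -
  have pr: "proper_fun g" using cpc by (simp add: closed_proper_convex_def)
  obtain z0 where "g z0 \<noteq> \<infinity>" using pr unfolding proper_fun_def by auto
  with pr obtain r0 where r0: "g z0 = ereal r0" by (rule proper_fun_real_value)
  define F where "F = (\<lambda>y::'a \<times> real. snd y + norm (fst y - x)^2 / (2*\<gamma>))"
  define C where "C = r0 + norm (z0 - x)^2 / (2*\<gamma>)"
  define K where "K = {(z, t). g z \<le> ereal t \<and> t + norm (z - x)^2 / (2*\<gamma>) \<le> C}"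
  have "compact K" unfolding K_def by (rule prox_sublevel_compact[OF cpc \<open>\<gamma> > 0\<close>])
  moreover have "(z0, r0) \<in> K" using r0 by (simp add: K_def C_def)
  moreover have "continuous_on K F" unfolding F_def
    by (intro continuous_intros) (use \<open>\<gamma> > 0\<close> in auto)
  ultimately obtain y where "y \<in> K" and ymin: "\<forall>y'\<in>K. F y \<le> F y'"
    using continuous_attains_inf by blast
  then obtain p t0 where y: "y = (p, t0)" and gp: "g p \<le> ereal t0" and Fp: "F (p, t0) \<le> C"
    by (cases y) (auto simp: K_def F_def)
  have "g p + ereal (norm (p - x)^2 / (2*\<gamma>)) \<le> g w + ereal (norm (w - x)^2 / (2*\<gamma>))" for w
  proof -
    have "g p + ereal (norm (p - x)^2 / (2*\<gamma>)) \<le> ereal (F (p, t0))"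
      using add_right_mono[OF gp, of "ereal (norm (p - x)^2 / (2*\<gamma>))"] by (simp add: F_def)
    also have "\<dots> \<le> g w + ereal (norm (w - x)^2 / (2*\<gamma>))"
    proof (cases "g w")
      case (real s)
      show ?thesis
      proof (cases "F (w, s) \<le> C")
        case True
        then have "(w, s) \<in> K" using real by (simp add: K_def F_def)
        then show ?thesis using ymin y real by (auto simp: F_def)
      next
        case False
        then show ?thesis using Fp real by (simp add: F_def)
      qed
    qed (use pr in \<open>auto simp: proper_fun_def\<close>)
    finally show ?thesis .
  qed
  then show ?thesis using that unfolding prox_point_def by blast
qed

lemma prox_subgradient:
  fixes g :: "'a::euclidean_space \<Rightarrow> ereal"
  assumes cpc: "closed_proper_convex g" and "\<gamma> > 0"
  obtains r where "g (prox g \<gamma> x) = ereal r"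
    "\<forall>z. ereal (r + (x - prox g \<gamma> x) \<bullet> (z - prox g \<gamma> x) / \<gamma>) \<le> g z"
proof -
  have cv: "convex_fun g" and pr: "proper_fun g" using cpc by (auto simp: closed_proper_convex_def)
  obtain p where pp: "prox_point g \<gamma> x p" using prox_point_exists[OF cpc \<open>\<gamma> > 0\<close>] .
  obtain r where hp: "g p = ereal r" and sg: "\<forall>z. ereal (r + (x - p) \<bullet> (z - p) / \<gamma>) \<le> g z"
    using prox_point_subgradient[OF cv pr \<open>\<gamma> > 0\<close> pp] .
  have "prox g \<gamma> x = p" by (rule prox_eq_if_subgradient[OF \<open>\<gamma> > 0\<close> hp sg])
  with hp sg show ?thesis using that by simp
qed

section \<open>Moreau decomposition\<close>

lemma conj_fun_lower_bound:
  assumes "h p = ereal r"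
  shows "ereal (y \<bullet> p - r) \<le> conj_fun h y"
  unfolding conj_fun_def by (rule SUP_upper2[where i = p]) (use assms in auto)

lemma conj_fun_at_subgradient:
  assumes pr: "proper_fun h" and hp: "h p = ereal r"
    and sg: "\<forall>z. ereal (r + q \<bullet> (z - p)) \<le> h z"
  shows "conj_fun h q = ereal (q \<bullet> p - r)"
proof (rule antisym)
  show "conj_fun h q \<le> ereal (q \<bullet> p - r)"
    unfolding conj_fun_def
  proof (rule SUP_least)
    fix z
    show "ereal (q \<bullet> z) - h z \<le> ereal (q \<bullet> p - r)"
    proof (cases "h z")
      case (real s)
      then have "r + q \<bullet> (z - p) \<le> s" using sg by (metis ereal_less_eq(3))
      then show ?thesis using real by (simp add: inner_diff_right)
    qed (use pr in \<open>auto simp: proper_fun_def\<close>)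
  qed
qed (rule conj_fun_lower_bound[of h p r, OF hp])

text \<open>With p the right-hand
  proximal point and q = v - \<sigma> p, q is a subgradient of g at p, hence p = (v - q)/\<sigma> is
  a subgradient of g* at q, which characterises q as the proximal point of g*.\<close>
lemma moreau_decomposition:
  fixes g :: "'a::euclidean_space \<Rightarrow> ereal"
  assumes cpc: "closed_proper_convex g" and "\<sigma> > 0"
  shows "prox (conj_fun g) \<sigma> v = v - \<sigma> *\<^sub>R prox g (1/\<sigma>) ((1/\<sigma>) *\<^sub>R v)"
proof -
  define p where "p = prox g (1/\<sigma>) ((1/\<sigma>) *\<^sub>R v)"
  define q where "q = v - \<sigma> *\<^sub>R p"
  obtain r where gp: "g p = ereal r"
    and sg: "\<forall>z. ereal (r + ((1/\<sigma>) *\<^sub>R v - p) \<bullet> (z - p) / (1/\<sigma>)) \<le> g z"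
    using prox_subgradient[OF cpc, of "1/\<sigma>" "(1/\<sigma>) *\<^sub>R v"] \<open>\<sigma> > 0\<close> unfolding p_def by auto
  have "((1/\<sigma>) *\<^sub>R v - p) \<bullet> w / (1/\<sigma>) = q \<bullet> w" for w
    using \<open>\<sigma> > 0\<close> by (simp add: q_def inner_diff_left algebra_simps)
  with sg have "\<forall>z. ereal (r + q \<bullet> (z - p)) \<le> g z" by simp
  then have conj_q: "conj_fun g q = ereal (q \<bullet> p - r)"
    using cpc gp by (intro conj_fun_at_subgradient) (auto simp: closed_proper_convex_def)
  have dual_sg: "(v - q) \<bullet> w / \<sigma> = p \<bullet> w" for w
    using \<open>\<sigma> > 0\<close> by (simp add: q_def)
  have "ereal (q \<bullet> p - r + (v - q) \<bullet> (y - q) / \<sigma>) \<le> conj_fun g y" for y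
  proof -
    have affine_eq: "q \<bullet> p - r + (v - q) \<bullet> (y - q) / \<sigma> = y \<bullet> p - r"
      unfolding dual_sg by (simp add: inner_diff_right inner_commute)
    show ?thesis unfolding affine_eq by (rule conj_fun_lower_bound[of g p r y, OF gp])
  qed
  then have "\<forall>y. ereal (q \<bullet> p - r + (v - q) \<bullet> (y - q) / \<sigma>) \<le> conj_fun g y" by blast
  then have "prox (conj_fun g) \<sigma> v = q"
    by (rule prox_eq_if_subgradient[of \<sigma> "conj_fun g", OF \<open>\<sigma> > 0\<close> conj_q])
  then show ?thesis by (simp add: q_def p_def)
qed

text \<open>The dual step of CP, written through g instead of g*: it is the u-step followed by
  the multiplier update of LADMP.\<close>
lemma prox_conj_dual_step:
  fixes g :: "'a::euclidean_space \<Rightarrow> ereal"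
  assumes "closed_proper_convex g" and "\<sigma> > 0"
  shows "prox (conj_fun g) \<sigma> (y + \<sigma> *\<^sub>R a) = y - \<sigma> *\<^sub>R (prox g (1/\<sigma>) ((1/\<sigma>) *\<^sub>R y + a) - a)"
proof -
  have "(1/\<sigma>) *\<^sub>R (y + \<sigma> *\<^sub>R a) = (1/\<sigma>) *\<^sub>R y + a" using \<open>\<sigma> > 0\<close> by (simp add: algebra_simps)
  then show ?thesis using moreau_decomposition[OF assms, of "y + \<sigma> *\<^sub>R a"] by (simp add: algebra_simps)
qed

section \<open>Equivalence of CP-xy(ybar) and LADMP-xuy\<close>

lemma gradx_QP_eq:
  fixes A :: "real^'n^'m"
  assumes "\<sigma> > 0"
  shows "gradx_QP A \<sigma> x u y = transpose A *v (y - \<sigma> *\<^sub>R (u - A *v x))"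
proof -
  have "- \<sigma> *\<^sub>R (u - A *v x - (1/\<sigma>) *\<^sub>R y) = y - \<sigma> *\<^sub>R (u - A *v x)"
    using assms by (simp add: algebra_simps)
  then show ?thesis unfolding gradx_QP_def by (metis matrix_vector_mult_scaleR)
qed

lemma cp_ladmp_invariant:
  fixes f :: "real^'n \<Rightarrow> ereal" and g :: "real^'m \<Rightarrow> ereal" and A :: "real^'n^'m"
  assumes cpc: "closed_proper_convex g" and "\<sigma> > 0" and u0: "u0 = A *v x0"
  shows "fst (cp_xyy f g A \<tau> \<sigma> x0 y0 k) = fst (ladmp_xuy f g A \<tau> \<sigma> x0 u0 y0 k)
    \<and> fst (snd (cp_xyy f g A \<tau> \<sigma> x0 y0 k)) = snd (snd (ladmp_xuy f g A \<tau> \<sigma> x0 u0 y0 k))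
    \<and> snd (snd (cp_xyy f g A \<tau> \<sigma> x0 y0 k)) = snd (snd (ladmp_xuy f g A \<tau> \<sigma> x0 u0 y0 k))
        - \<sigma> *\<^sub>R (fst (snd (ladmp_xuy f g A \<tau> \<sigma> x0 u0 y0 k)) - A *v fst (ladmp_xuy f g A \<tau> \<sigma> x0 u0 y0 k))"
proof (induction k)
  case 0
  then show ?case using u0 by simp
next
  case (Suc k)
  obtain x y yb where cp: "cp_xyy f g A \<tau> \<sigma> x0 y0 k = (x, y, yb)" by (metis prod.exhaust)
  obtain x2 u y2 where la: "ladmp_xuy f g A \<tau> \<sigma> x0 u0 y0 k = (x2, u, y2)" by (metis prod.exhaust)
  from Suc.IH have same: "x2 = x" "y2 = y" and yb: "yb = y - \<sigma> *\<^sub>R (u - A *v x)"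
    by (auto simp: cp la)
  define x' where "x' = prox f \<tau> (x - \<tau> *\<^sub>R (transpose A *v yb))"
  define u' where "u' = prox g (1/\<sigma>) ((1/\<sigma>) *\<^sub>R y + A *v x')"
  define y' where "y' = y - \<sigma> *\<^sub>R (u' - A *v x')"
  have "prox (conj_fun g) \<sigma> (y + \<sigma> *\<^sub>R (A *v x')) = y'"
    unfolding y'_def u'_def by (rule prox_conj_dual_step[OF cpc \<open>\<sigma> > 0\<close>])
  then have cp': "cp_xyy f g A \<tau> \<sigma> x0 y0 (Suc k) = (x', y', 2 *\<^sub>R y' - y)"
    by (simp add: cp Let_def x'_def)
  have "gradx_QP A \<sigma> x u y = transpose A *v yb" using gradx_QP_eq[OF \<open>\<sigma> > 0\<close>] yb by simp
  then have la': "ladmp_xuy f g A \<tau> \<sigma> x0 u0 y0 (Suc k) = (x', u', y')"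
    by (simp add: la same Let_def x'_def u'_def y'_def)
  have "2 *\<^sub>R y' - y = y' - \<sigma> *\<^sub>R (u' - A *v x')"
    unfolding scaleR_2 by (simp add: y'_def algebra_simps)
  then show ?case unfolding cp' la' by simp
qed

theorem theorem2p3:
  fixes f :: "real^'n \<Rightarrow> ereal" and g :: "real^'m \<Rightarrow> ereal"
    and A :: "real^'n^'m" and \<tau> \<sigma> :: real
    and x0 :: "real^'n" and u0 y0 :: "real^'m"
  assumes "closed_proper_convex f" and "closed_proper_convex g"
    and "\<tau> > 0" and "\<sigma> > 0"
    and "u0 = A *v x0"
  shows "\<forall>k\<ge>1. fst (cp_xyy f g A \<tau> \<sigma> x0 y0 k) = fst (ladmp_xuy f g A \<tau> \<sigma> x0 u0 y0 k)
              \<and> fst (snd (cp_xyy f g A \<tau> \<sigma> x0 y0 k)) = snd (snd (ladmp_xuy f g A \<tau> \<sigma> x0 u0 y0 k))"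
  using cp_ladmp_invariant[OF assms(2) assms(4) assms(5)] by blast

end
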